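(* Let $p\ge 1$ and $q\ge 0$ be integers and let $u$ be the unique integer in the interval $[p,p+q]$ maximizing $v_2(u)$. Then $$v_2\Big(\sum_{i=0}^{q}\frac{\binom{q}{i}}{p+i}\Big)=v_2\Big(\frac{\binom{q}{u-p}}{u}\Big).$$
   Context: For a nonzero rational number $x=2^m a/b$ with $a,b$ odd integers, $v_2(x)=m$ is its $2$-adic valuation. *)

theory Defs
  imports Complex_Main "HOL-Computational_Algebra.Computational_Algebra"
begin

text \<open>2-adic valuation of a nonzero rational x = 2^m a/b (a, b odd): v2 x = m.
  Computed from the reduced fraction representation. (Value at 0 is 0 by convention.)\<close>
definition v2 :: "rat \<Rightarrow> int" where
  "v2 x = (let (a, b) = quotient_of x in
             int (multiplicity (2::int) a) - int (multiplicity (2::int) b))"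

end

theory Submission
  imports Defs
begin

text \<open>
  Write S(x, n) for the sum of (n choose i) / (x + i) over 0 <= i <= n. Splitting
  (x + i) (n+1 choose i) = x (n+1 choose i) + (n+1) (n choose i-1) gives
  x S(x, n+1) + (n+1) S(x+1, n) = 2^(n+1), and since v2 ((n+1) S(p+1, n)) <= v2 (n+1) < n+1,
  induction on n yields v2 S(p, n) = - v2 (p (p+n choose n)).

  On the other side, p (p+n choose n) (n choose k) k! (n-k)! = p (p+1) ... (p+n). If u = p + k
  has strictly the largest 2-adic valuation in [p, p+n], the ultrametric inequality gives
  v2 (u - j) = v2 j and v2 (u + j) = v2 j for the remaining factors, so the valuation of the
  product is v2 u + v2 (k!) + v2 ((n-k)!), i.e. v2 (p (p+n choose n)) + v2 (n choose k) = v2 u.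
\<close>

lemma multiplicity_add_eq_left:
  fixes p x y :: "'a :: {factorial_semiring, comm_ring_1}"
  assumes "\<not> is_unit p" "x \<noteq> 0" "multiplicity p x < multiplicity p y"
  shows "multiplicity p (x + y) = multiplicity p x"
proof (rule multiplicity_eqI)
  have "p ^ multiplicity p x dvd y"
    using assms(3) by (intro multiplicity_dvd') simp
  then show "p ^ multiplicity p x dvd x + y"
    by (simp add: multiplicity_dvd)
  have "p ^ Suc (multiplicity p x) dvd y"
    using assms(3) by (intro multiplicity_dvd') simp
  moreover have "\<not> p ^ Suc (multiplicity p x) dvd x"
    using multiplicity_geI[OF assms(2,1)] by fastforce
  ultimately show "\<not> p ^ Suc (multiplicity p x) dvd x + y"
    by (simp add: dvd_add_left_iff)
qed

lemma multiplicity_eq_of_shift: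
  fixes p u j :: "'a :: {factorial_semiring, comm_ring_1}"
  assumes "\<not> is_unit p" "u + j \<noteq> 0" "multiplicity p (u + j) < multiplicity p u"
  shows "multiplicity p j = multiplicity p (u + j)"
  using multiplicity_add_eq_left[of p "u + j" "- u"] assms by simp

lemma multiplicity_of_nat_mult:
  fixes r :: int
  assumes "prime_elem r" "a \<noteq> 0" "b \<noteq> 0"
  shows "multiplicity r (int (a * b)) = multiplicity r (int a) + multiplicity r (int b)"
  using prime_elem_multiplicity_mult_distrib[of r "int a" "int b"] assms by simp

lemma multiplicity_less_self:
  fixes p n :: int
  assumes "p \<ge> 2" "n > 0"
  shows "int (multiplicity p n) < n"
proof -
  have "int (multiplicity p n) < 2 ^ multiplicity p n"
    by (induction "multiplicity p n") simp_all
  also have "\<dots> \<le> p ^ multiplicity p n"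
    using assms(1) by (intro power_mono) simp_all
  also have "\<dots> \<le> n"
    using assms(2) by (intro zdvd_imp_le multiplicity_dvd)
  finally show ?thesis .
qed

lemma multiplicity_pochhammer_above_eq_fact:
  fixes r u :: int
  assumes "prime_elem r"
    and "\<And>j. 1 \<le> j \<Longrightarrow> j \<le> m \<Longrightarrow>
           u + int j \<noteq> 0 \<and> multiplicity r (u + int j) < multiplicity r u"
  shows "multiplicity r (pochhammer (u + 1) m) = multiplicity r (fact m :: int)"
  using assms(2)
proof (induction m)
  case 0
  show ?case by simp
next
  case (Suc m)
  have top: "u + int (Suc m) \<noteq> 0" "multiplicity r (u + int (Suc m)) < multiplicity r u"
    using Suc.prems[of "Suc m"] by simp_all
  have "u + 1 + int i \<noteq> 0" if "i < m" for i
    using Suc.prems[of "Suc i"] that by (simp add: add.assoc)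
  then have "pochhammer (u + 1) m \<noteq> 0"
    by (simp add: pochhammer_prod)
  then have "multiplicity r (pochhammer (u + 1) (Suc m))
      = multiplicity r (fact m :: int) + multiplicity r (u + int (Suc m))"
    using top Suc by (simp add: pochhammer_Suc prime_elem_multiplicity_mult_distrib[OF assms(1)] add_ac)
  also have "multiplicity r (u + int (Suc m)) = multiplicity r (int (Suc m))"
    using multiplicity_eq_of_shift[of r u "int (Suc m)"] assms(1) top by (simp add: prime_elem_def)
  finally show ?case
    by (simp add: prime_elem_multiplicity_mult_distrib[OF assms(1)] del: of_nat_Suc)
qed

lemma multiplicity_pochhammer_below_eq_fact:
  fixes r u :: int
  assumes "prime_elem r"
    and "\<And>j. 1 \<le> j \<Longrightarrow> j \<le> m \<Longrightarrow>
           u - int j \<noteq> 0 \<and> multiplicity r (u - int j) < multiplicity r u"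
  shows "multiplicity r (pochhammer (u - int m) m) = multiplicity r (fact m :: int)"
proof -
  have "pochhammer (u - int m) m = (- 1) ^ m * pochhammer (- u + 1) m"
    using pochhammer_minus[of "int m - u" m] by simp
  moreover have "multiplicity r (pochhammer (- u + 1) m) = multiplicity r (fact m :: int)"
  proof (rule multiplicity_pochhammer_above_eq_fact[OF assms(1)])
    fix j assume "1 \<le> j" "j \<le> m"
    then show "- u + int j \<noteq> 0 \<and> multiplicity r (- u + int j) < multiplicity r (- u)"
      using assms(2)[of j] multiplicity_uminus_right[of r "u - int j"] by simp
  qed
  ultimately show ?thesis
    by (simp add: multiplicity_times_unit_right)
qed

lemma multiplicity_pochhammer_strict_max:
  fixes r a :: int
  assumes "prime_elem r" "a > 0" "k \<le> n"
    and max: "\<And>i. i \<le> n \<Longrightarrow> i \<noteq> k \<Longrightarrow>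
           multiplicity r (a + int i) < multiplicity r (a + int k)"
  shows "multiplicity r (pochhammer a (Suc n)) =
    multiplicity r (a + int k) + multiplicity r (fact k :: int) + multiplicity r (fact (n - k) :: int)"
proof -
  define u where "u = a + int k"
  have split: "pochhammer a (Suc n) = pochhammer (u - int k) k * (u * pochhammer (u + 1) (n - k))"
    using pochhammer_product'[of a k "Suc (n - k)"] assms(3)
    by (simp add: u_def pochhammer_rec Suc_diff_le)
  have below: "multiplicity r (pochhammer (u - int k) k) = multiplicity r (fact k :: int)"
  proof (rule multiplicity_pochhammer_below_eq_fact[OF assms(1)])
    fix j assume "1 \<le> j" "j \<le> k"
    then show "u - int j \<noteq> 0 \<and> multiplicity r (u - int j) < multiplicity r u"
      using max[of "k - j"] assms(2,3) by (simp add: u_def of_nat_diff add_diff_eq)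
  qed
  have above: "multiplicity r (pochhammer (u + 1) (n - k)) = multiplicity r (fact (n - k) :: int)"
  proof (rule multiplicity_pochhammer_above_eq_fact[OF assms(1)])
    fix j assume "1 \<le> j" "j \<le> n - k"
    then show "u + int j \<noteq> 0 \<and> multiplicity r (u + int j) < multiplicity r u"
      using max[of "k + j"] assms(2) by (simp add: u_def add.assoc)
  qed
  have "pochhammer (u - int k) k > 0" "u > 0" "pochhammer (u + 1) (n - k) > 0"
    using assms(2) by (simp_all add: u_def pochhammer_pos)
  then show ?thesis
    unfolding u_def[symmetric]
    by (simp add: split prime_elem_multiplicity_mult_distrib[OF assms(1)] below above)
qed

lemma pochhammer_eq_binomial_product:
  fixes m n k :: nat
  assumes "m \<ge> 1" "k \<le> n"
  shows "pochhammer m (Suc n) = m * (m + n choose n) * (n choose k) * fact k * fact (n - k)"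
proof -
  obtain l where m: "m = Suc l"
    using assms(1) by (cases m) auto
  have "fact l * pochhammer m (Suc n) = fact (m + n)"
    using pochhammer_product'[of "1 :: nat" l "Suc n"]
    by (simp only: pochhammer_fact[symmetric]) (simp add: m)
  also have "\<dots> = fact n * fact m * (m + n choose n)"
    using binomial_fact_lemma[of n "m + n"] by simp
  also have "\<dots> = fact l * (m * (m + n choose n) * (n choose k) * fact k * fact (n - k))"
    unfolding binomial_fact_lemma[OF assms(2), symmetric] m fact_Suc of_nat_id
    by (simp only: ac_simps)
  finally show ?thesis
    by simp
qed

lemma multiplicity_binomial_product_strict_max:
  fixes r :: int and m n k :: nat
  assumes "prime_elem r" "m \<ge> 1" "k \<le> n"
    and "\<And>i. i \<le> n \<Longrightarrow> i \<noteq> k \<Longrightarrow>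
           multiplicity r (int m + int i) < multiplicity r (int m + int k)"
  shows "multiplicity r (int (m * (m + n choose n))) + multiplicity r (int (n choose k))
    = multiplicity r (int m + int k)"
proof -
  define A B where "A = m * (m + n choose n)" and "B = n choose k"
  have "A > 0" "B > 0"
    using assms(2,3) by (simp_all add: A_def B_def)
  have "pochhammer (int m) (Suc n) = int A * int B * fact k * fact (n - k)"
    unfolding pochhammer_of_nat pochhammer_eq_binomial_product[OF assms(2,3)]
    by (simp only: A_def B_def of_nat_mult of_nat_fact)
  moreover have "multiplicity r (pochhammer (int m) (Suc n)) = multiplicity r (int m + int k)
      + multiplicity r (fact k :: int) + multiplicity r (fact (n - k) :: int)"
    using multiplicity_pochhammer_strict_max[of r "int m" k n] assms by simp
  ultimately show ?thesis
    using \<open>A > 0\<close> \<open>B > 0\<close>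
    by (simp add: A_def[symmetric] B_def[symmetric] prime_elem_multiplicity_mult_distrib[OF assms(1)])
qed

lemma rat_common_denominator:
  fixes x y :: rat
  obtains a c d :: int where "d > 0" "x = of_int a / of_int d" "y = of_int c / of_int d"
proof -
  obtain a b where ab: "quotient_of x = (a, b)" by fastforce
  obtain c e where ce: "quotient_of y = (c, e)" by fastforce
  have "b > 0" "e > 0"
    using ab ce quotient_of_denom_pos by blast+
  moreover have "x = of_int (a * e) / of_int (b * e)" "y = of_int (c * b) / of_int (b * e)"
    using quotient_of_div[OF ab] quotient_of_div[OF ce] calculation by simp_all
  ultimately show ?thesis
    using that[of "b * e" "a * e" "c * b"] by simp
qed

lemma v2_of_int [simp]: "v2 (of_int a) = int (multiplicity 2 a)"
  by (simp add: v2_def quotient_of_int)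

lemma v2_of_nat [simp]: "v2 (of_nat n) = int (multiplicity 2 (int n))"
  using v2_of_int[of "int n"] by simp

lemma v2_int_fraction:
  assumes "a \<noteq> 0" "b \<noteq> 0"
  shows "v2 (of_int a / of_int b) = int (multiplicity 2 a) - int (multiplicity 2 b)"
proof -
  obtain c d where cd: "quotient_of (of_int a / of_int b) = (c, d)" by fastforce
  have "d > 0" "(of_int a / of_int b :: rat) = of_int c / of_int d"
    using cd quotient_of_denom_pos quotient_of_div by blast+
  with assms have "c \<noteq> 0" "a * d = c * b"
    by (auto simp: frac_eq_eq simp flip: of_int_mult)
  moreover have "prime_elem (2 :: int)"
    by simp
  ultimately have "multiplicity 2 a + multiplicity 2 d = multiplicity 2 c + multiplicity 2 b"
    using assms \<open>d > 0\<close> by (metis prime_elem_multiplicity_mult_distrib less_irrefl)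
  then show ?thesis
    unfolding v2_def cd by simp
qed

lemma v2_mult:
  assumes "x \<noteq> 0" "y \<noteq> 0"
  shows "v2 (x * y) = v2 x + v2 y"
proof -
  obtain a c d where "d > 0" and xy: "x = of_int a / of_int d" "y = of_int c / of_int d"
    by (rule rat_common_denominator)
  with assms have "a \<noteq> 0" "c \<noteq> 0"
    by auto
  with \<open>d > 0\<close> show ?thesis
    using v2_int_fraction[of "a * c" "d * d"] v2_int_fraction[of a d] v2_int_fraction[of c d]
    by (simp add: xy prime_elem_multiplicity_mult_distrib)
qed

lemma v2_divide:
  assumes "x \<noteq> 0" "y \<noteq> 0"
  shows "v2 (x / y) = v2 x - v2 y"
proof -
  have "v2 (x / y) + v2 y = v2 x"
    using v2_mult[of "x / y" y] assms by simp
  then show ?thesis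
    by simp
qed

lemma v2_uminus [simp]: "v2 (- x) = v2 x"
proof -
  obtain a c d where "d > 0" "x = of_int a / of_int d"
    by (rule rat_common_denominator)
  then show ?thesis
    using v2_int_fraction[of a d] v2_int_fraction[of "- a" d] by (cases "a = 0") simp_all
qed

lemma v2_add_eq_left:
  assumes "x \<noteq> 0" "v2 x < v2 y"
  shows "v2 (x + y) = v2 x"
proof -
  obtain a c d where "d > 0" and xy: "x = of_int a / of_int d" "y = of_int c / of_int d"
    by (rule rat_common_denominator)
  with assms have "a \<noteq> 0"
    by auto
  show ?thesis
  proof (cases "c = 0")
    case False
    with assms \<open>a \<noteq> 0\<close> \<open>d > 0\<close> have "multiplicity 2 a < multiplicity 2 c"
      by (simp add: xy v2_int_fraction)
    then have "multiplicity 2 (a + c) = multiplicity 2 a"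
      by (intro multiplicity_add_eq_left \<open>a \<noteq> 0\<close>) simp
    moreover have "a + c \<noteq> 0"
      using \<open>multiplicity 2 a < multiplicity 2 c\<close> by (auto simp flip: eq_neg_iff_add_eq_0)
    ultimately show ?thesis
      using \<open>a \<noteq> 0\<close> \<open>d > 0\<close> v2_int_fraction[of "a + c" d] v2_int_fraction[of a d]
      by (simp add: xy add_divide_distrib)
  qed (simp add: xy)
qed

lemma v2_power_two [simp]: "v2 (2 ^ k) = int k"
  using v2_of_int[of "2 ^ k"] by (simp add: multiplicity_same_power)

definition binom_frac_sum :: "'a :: field \<Rightarrow> nat \<Rightarrow> 'a" where
  "binom_frac_sum x n = (\<Sum>i = 0..n. of_nat (n choose i) / (x + of_nat i))"

lemma binom_frac_sum_pos:
  fixes x :: "'a :: linordered_field"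
  assumes "x > 0"
  shows "binom_frac_sum x n > 0"
  unfolding binom_frac_sum_def using assms by (intro sum_pos) (auto intro!: divide_pos_pos add_pos_nonneg)

lemma binom_frac_sum_rec:
  fixes x :: "'a :: field"
  assumes "\<And>i. i \<le> Suc n \<Longrightarrow> x + of_nat i \<noteq> 0"
  shows "x * binom_frac_sum x (Suc n) + of_nat (Suc n) * binom_frac_sum (x + 1) n = 2 ^ Suc n"
proof -
  define f where "f i = of_nat (Suc n choose i) * of_nat i / (x + of_nat i)" for i
  have "of_nat (Suc n) * binom_frac_sum (x + 1) n = (\<Sum>i\<le>n. f (Suc i))"
    unfolding binom_frac_sum_def sum_distrib_left atLeast0AtMost
  proof (rule sum.cong)
    fix i
    have "of_nat (Suc n) * of_nat (n choose i) = (of_nat (Suc n choose Suc i) * of_nat (Suc i) :: 'a)"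
      by (simp only: Suc_times_binomial_eq flip: of_nat_mult)
    then show "of_nat (Suc n) * (of_nat (n choose i) / (x + 1 + of_nat i)) = f (Suc i)"
      by (simp add: f_def add_ac)
  qed simp
  also have "\<dots> = (\<Sum>i\<le>Suc n. f i)"
    by (simp only: sum.atMost_Suc_shift) (simp add: f_def)
  finally have shifted: "of_nat (Suc n) * binom_frac_sum (x + 1) n = (\<Sum>i\<le>Suc n. f i)" .
  have "x * binom_frac_sum x (Suc n) + of_nat (Suc n) * binom_frac_sum (x + 1) n
      = (\<Sum>i\<le>Suc n. x * (of_nat (Suc n choose i) / (x + of_nat i)) + f i)"
    unfolding sum.distrib shifted
    unfolding binom_frac_sum_def atLeast0AtMost sum_distrib_left ..
  also have "\<dots> = (\<Sum>i\<le>Suc n. of_nat (Suc n choose i))"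
  proof (rule sum.cong)
    fix i
    assume "i \<in> {..Suc n}"
    then have "x + of_nat i \<noteq> 0"
      using assms by simp
    then show "x * (of_nat (Suc n choose i) / (x + of_nat i)) + f i = of_nat (Suc n choose i)"
      by (simp add: f_def divide_simps) (simp add: algebra_simps)
  qed simp
  also have "\<dots> = 2 ^ Suc n"
    by (simp only: flip: of_nat_sum) (simp only: choose_row_sum of_nat_power of_nat_numeral)
  finally show ?thesis .
qed

lemma v2_binom_frac_sum:
  fixes m n :: nat
  assumes "m \<ge> 1"
  shows "v2 (binom_frac_sum (of_nat m) n) = - v2 (of_nat (m * (m + n choose n)))"
  using assms
proof (induction n arbitrary: m)
  case 0
  then show ?case
    using v2_divide[of 1 "of_nat m"] by (simp add: binom_frac_sum_def v2_def)
next
  case (Suc n)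
  define S where "S = binom_frac_sum (of_nat m :: rat) (Suc n)"
  define S' where "S' = binom_frac_sum (of_nat (Suc m) :: rat) n"
  define T where "T = of_nat (Suc n) * S'"
  define C where "C = m + Suc n choose Suc n"
  define C' where "C' = Suc m + n choose n"
  have pos: "S > 0" "S' > 0"
    using Suc.prems by (simp_all add: S_def S'_def binom_frac_sum_pos)
  have "v2 T = v2 (of_nat (Suc n)) + v2 S'"
    using pos by (simp add: T_def v2_mult)
  also have "\<dots> = v2 (of_nat (Suc n)) - v2 (of_nat (Suc m * C'))"
    using Suc.IH[of "Suc m"] by (simp add: S'_def C'_def)
  finally have vT: "v2 T = int (multiplicity 2 (int (Suc n))) - int (multiplicity 2 (int (Suc m * C')))"
    unfolding v2_of_nat .
  then have "v2 (- T) < v2 (2 ^ Suc n)"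
    using multiplicity_less_self[of 2 "int (Suc n)"] by (simp only: v2_uminus v2_power_two) simp
  moreover have "(of_nat m :: rat) + of_nat i \<noteq> 0" for i
    using Suc.prems by (simp flip: of_nat_add)
  then have "of_nat m * S = - T + 2 ^ Suc n"
    using binom_frac_sum_rec[of n "of_nat m :: rat"] by (simp add: S_def S'_def T_def add_ac)
  ultimately have "v2 (of_nat m) + v2 S = v2 T"
    using v2_add_eq_left[of "- T" "2 ^ Suc n"] v2_mult[of "of_nat m" S] pos Suc.prems
    by (simp add: T_def)
  moreover have "Suc n * C = Suc m * C'"
    using Suc_times_binomial_add[of n m] by (simp add: C_def C'_def add_ac)
  then have "multiplicity 2 (int (Suc n)) + multiplicity 2 (int C)
      = multiplicity (2 :: int) (int (Suc m)) + multiplicity 2 (int C')"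
    using multiplicity_of_nat_mult[of 2 "Suc n" C] multiplicity_of_nat_mult[of 2 "Suc m" C']
    by (simp add: C_def C'_def del: of_nat_Suc binomial_Suc_Suc)
  ultimately show ?case
    using vT multiplicity_of_nat_mult[of 2 m C] multiplicity_of_nat_mult[of 2 "Suc m" C'] Suc.prems
    unfolding S_def[symmetric] C_def[symmetric] v2_of_nat
    by (simp add: C_def C'_def del: of_nat_Suc binomial_Suc_Suc)
qed

theorem mainTheorem12:
  fixes p q u :: int
  assumes "p \<ge> 1" and "q \<ge> 0"
    and "p \<le> u" and "u \<le> p + q"
    and "\<forall>w. p \<le> w \<and> w \<le> p + q \<and> w \<noteq> u \<longrightarrow>
               v2 (of_int w) < v2 (of_int u)"
  shows "v2 (\<Sum>i = 0..nat q. of_nat (nat q choose i) / (of_int p + of_nat i))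
         = v2 (of_nat (nat q choose nat (u - p)) / of_int u)"
proof -
  define m n k where "m = nat p" and "n = nat q" and "k = nat (u - p)"
  have m: "p = int m" "m \<ge> 1" and n: "q = int n" and k: "u = int m + int k" "k \<le> n"
    using assms by (simp_all add: m_def n_def k_def)
  have "multiplicity 2 (int m + int i) < multiplicity 2 (int m + int k)" if "i \<le> n" "i \<noteq> k" for i
  proof -
    have "v2 (of_int (int m + int i)) < v2 (of_int (int m + int k))"
      using assms(5)[rule_format, of "int m + int i"] that m n k by auto
    then show ?thesis
      unfolding v2_of_int by simp
  qed
  then have "multiplicity 2 (int (m * (m + n choose n))) + multiplicity 2 (int (n choose k))
      = multiplicity (2 :: int) u"
    using multiplicity_binomial_product_strict_max[of 2 m k n] m k by simp
  moreover have "v2 (binom_frac_sum (of_nat m) n) = - v2 (of_nat (m * (m + n choose n)))"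
    using v2_binom_frac_sum m(2) .
  moreover have "v2 (of_nat (n choose k) / of_int u) = v2 (of_nat (n choose k)) - v2 (of_int u)"
    using k m by (intro v2_divide) simp_all
  ultimately show ?thesis
    unfolding k_def[symmetric] n_def[symmetric]
    unfolding v2_of_nat v2_of_int binom_frac_sum_def m(1)
    by simp
qed

end
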